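(* Define words $w_{[n]}$ over $\{1,-1\}$ of length $3^n$ by $w_{[0]}=1$ and $w_{[n+1]}=w_{[n]}\,w_{[n]}\,w_{[n]}'$, where $w_{[n]}'$ is obtained from $w_{[n]}$ by changing its middle symbol (the symbol in position $(3^n+1)/2$, which is $1$) from $1$ to $-1$. Then $w_{[n]}$ is a prefix of $w_{[n+1]}$ for all $n$, so the limit $\lim_{n\to\infty}w_{[n]}$ is a well-defined infinite sequence, and it equals $w_\alpha$.
   Context: $w_\alpha=\lim_{n\to\infty}\phi^n(1)$, where $\phi$ is the monoid endomorphism of $\{1,-1\}^*$ determined by $\phi(1)=1\,1\,(-1)$ and $\phi(-1)=1\,(-1)\,(-1)$. *)

theory Defs
  imports Main "HOL-Library.Sublist"
begin

text \<open>Words over the alphabet {1,-1} are represented as int lists (finite words)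
  and as functions nat => int (infinite words).\<close>

definition phi_sym :: "int \<Rightarrow> int list" where
  "phi_sym x = (if x = 1 then [1, 1, -1] else [1, -1, -1])"

definition phi :: "int list \<Rightarrow> int list" where
  "phi xs = concat (map phi_sym xs)"

text \<open>Limit of a sequence of finite words: position k is eventually defined and
  eventually constant equal to w k (convergence in the product topology).\<close>
definition word_limit :: "(nat \<Rightarrow> int list) \<Rightarrow> (nat \<Rightarrow> int) \<Rightarrow> bool" where
  "word_limit ws w \<longleftrightarrow> (\<forall>k. \<exists>N. \<forall>n\<ge>N. k < length (ws n) \<and> ws n ! k = w k)"

definition w_alpha :: "nat \<Rightarrow> int" where
  "w_alpha = (THE w. word_limit (\<lambda>n. (phi ^^ n) [1]) w)"

text \<open>w_[0] = 1, w_[n+1] = w_[n] w_[n] w_[n]', where w_[n]' changes the middle symbol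
  (position (3^n+1)/2, 1-based; index (3^n - 1) div 2, 0-based) to -1.\<close>
fun wn :: "nat \<Rightarrow> int list" where
  "wn 0 = [1]"
| "wn (Suc n) = wn n @ wn n @ (wn n)[(3 ^ n - 1) div 2 := -1]"

end

theory Submission
  imports Defs
begin

text \<open>Since \<open>\<phi>\<close> is a monoid morphism, \<open>\<phi>^(n+1)(1) = \<phi>^n(1) \<phi>^n(1) \<phi>^n(-1)\<close> and
  \<open>\<phi>^(n+1)(-1) = \<phi>^n(1) \<phi>^n(-1) \<phi>^n(-1)\<close>. A simultaneous induction shows that
  \<open>\<phi>^n(-1)\<close> is \<open>\<phi>^n(1)\<close> with its middle symbol switched to \<open>-1\<close>, hence \<open>\<phi>^n(1) = w[n]\<close>.
  The words \<open>w[n]\<close> form a prefix chain of unbounded length, and such a chain has exactly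
  one limit.\<close>

lemma word_limit_unique:
  assumes "word_limit ws w" and "word_limit ws v"
  shows "w = v"
proof
  fix k
  obtain N1 N2 where "\<forall>n\<ge>N1. ws n ! k = w k" and "\<forall>n\<ge>N2. ws n ! k = v k"
    using assms unfolding word_limit_def by blast
  then show "w k = v k" by (metis max.cobounded1 max.cobounded2)
qed

lemma prefix_chain_mono:
  assumes "\<And>n. prefix (ws n) (ws (Suc n))" and "n \<le> m"
  shows "prefix (ws n) (ws m)"
  using assms(2)
proof (induction m rule: dec_induct)
  case base
  show ?case by simp
next
  case (step m)
  then show ?case using assms(1) prefix_order.trans by blast
qed

lemma word_limit_prefix_chain:
  assumes chain: "\<And>n. prefix (ws n) (ws (Suc n))"
    and unbounded: "\<And>k. \<exists>n. k < length (ws n)"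
  shows "\<exists>w. word_limit ws w"
proof
  define N where "N k = (SOME n. k < length (ws n))" for k
  have N: "k < length (ws (N k))" for k
    unfolding N_def using unbounded by (rule someI_ex)
  show "word_limit ws (\<lambda>k. ws (N k) ! k)"
    unfolding word_limit_def
  proof (intro allI exI impI)
    fix k n
    assume "N k \<le> n"
    then obtain zs where "ws n = ws (N k) @ zs"
      using prefix_chain_mono[of ws, OF chain] prefixE by metis
    then show "k < length (ws n) \<and> ws n ! k = ws (N k) ! k"
      using N[of k] by (simp add: nth_append)
  qed
qed

lemma phi_append: "phi (xs @ ys) = phi xs @ phi ys"
  by (simp add: phi_def)

lemma funpow_phi_append: "(phi ^^ n) (xs @ ys) = (phi ^^ n) xs @ (phi ^^ n) ys"
  by (induction n) (simp_all add: phi_append)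

lemma phi_singleton: "x \<in> {1, -1} \<Longrightarrow> phi [x] = [1, x, -1]"
  by (auto simp: phi_def phi_sym_def)

lemma funpow_phi_Suc_singleton:
  assumes "x \<in> {1, -1}"
  shows "(phi ^^ Suc n) [x] = (phi ^^ n) [1] @ (phi ^^ n) [x] @ (phi ^^ n) [-1]"
proof -
  have "(phi ^^ Suc n) [x] = (phi ^^ n) ([1] @ [x] @ [-1])"
    by (simp only: funpow_Suc_right o_apply phi_singleton[OF assms]) simp
  then show ?thesis by (simp only: funpow_phi_append)
qed

lemma odd_triple_half: "odd (m::nat) \<Longrightarrow> (3 * m - 1) div 2 = m + (m - 1) div 2"
  by (elim oddE) simp

lemma middle_index_Suc: "((3::nat) ^ Suc n - 1) div 2 = 3 ^ n + (3 ^ n - 1) div 2"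
  by (simp add: odd_triple_half)

lemma middle_index_less: "((3::nat) ^ n - 1) div 2 < 3 ^ n"
  using one_le_power[of "3::nat" n] by linarith

lemma length_wn: "length (wn n) = 3 ^ n"
  by (induction n) simp_all

lemma wn_Suc_middle_update:
  "(wn (Suc n))[(3 ^ Suc n - 1) div 2 := x]
     = wn n @ (wn n)[(3 ^ n - 1) div 2 := x] @ (wn n)[(3 ^ n - 1) div 2 := -1]"
  unfolding middle_index_Suc
  using middle_index_less[of n] by (simp add: list_update_append length_wn)

lemma wn_middle: "wn n ! ((3 ^ n - 1) div 2) = 1"
proof (induction n)
  case 0
  show ?case by simp
next
  case (Suc n)
  have "wn (Suc n) ! ((3 ^ Suc n - 1) div 2) = wn n ! ((3 ^ n - 1) div 2)"
    unfolding middle_index_Suc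
    using middle_index_less[of n] by (simp add: nth_append length_wn)
  then show ?case using Suc.IH by simp
qed

lemma funpow_phi_singletons:
  "(phi ^^ n) [1] = wn n \<and> (phi ^^ n) [-1] = (wn n)[(3 ^ n - 1) div 2 := -1]"
proof (induction n)
  case 0
  show ?case by simp
next
  case (Suc n)
  have "(phi ^^ Suc n) [1] = (phi ^^ n) [1] @ (phi ^^ n) [1] @ (phi ^^ n) [-1]"
    and "(phi ^^ Suc n) [-1] = (phi ^^ n) [1] @ (phi ^^ n) [-1] @ (phi ^^ n) [-1]"
    by (simp_all del: funpow.simps add: funpow_phi_Suc_singleton)
  then show ?case
    unfolding wn_Suc_middle_update using Suc.IH by (simp del: funpow.simps)
qed

lemma prefix_wn_Suc: "prefix (wn n) (wn (Suc n))"
  by simp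

theorem mainTheorem3:
  shows "(\<forall>n. length (wn n) = 3 ^ n \<and> wn n ! ((3 ^ n - 1) div 2) = 1)
       \<and> (\<forall>n. prefix (wn n) (wn (Suc n)))
       \<and> (\<exists>!w. word_limit wn w)
       \<and> word_limit wn w_alpha"
proof (intro conjI allI)
  fix n
  show "length (wn n) = 3 ^ n" by (rule length_wn)
  show "wn n ! ((3 ^ n - 1) div 2) = 1" by (rule wn_middle)
  show "prefix (wn n) (wn (Suc n))" by (rule prefix_wn_Suc)
next
  have "k < length (wn k)" for k
  proof -
    have "k < 2 ^ k" by (rule less_exp)
    also have "(2::nat) ^ k \<le> 3 ^ k" by (simp add: power_mono)
    finally show ?thesis by (simp add: length_wn)
  qed
  then have "\<exists>w. word_limit wn w"
    using word_limit_prefix_chain[of wn, OF prefix_wn_Suc] by blast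
  then show ex1: "\<exists>!w. word_limit wn w"
    using word_limit_unique by blast
  have "(\<lambda>n. (phi ^^ n) [1]) = wn"
    using funpow_phi_singletons by auto
  then show "word_limit wn w_alpha"
    unfolding w_alpha_def using theI'[OF ex1] by simp
qed

end
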